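(* Let $n\ge2$ and $d\ge1$ with $d^2\mid n-1$, and let $L_{n,d}$ be the rank two lattice with basis in which the Gram matrix is $\frac{2n-2}{d^2}\begin{pmatrix}1&0\\0&0\end{pmatrix}$. A vector $(x,y)\in L_{n,d}$ is primitive of self-intersection $2n-2$ if and only if $|x|=d$ and $\gcd(d,y)=1$. Two primitive vectors $(d,y)$ and $(d,z)$ belong to the same $O(L_{n,d})$-orbit if and only if $y\equiv z$ or $y\equiv -z$ modulo $d$. Consequently, for $d\ge 2$, the number of $O(L_{n,d})$-orbits of primitive vectors of $L_{n,d}$ of self-intersection $2n-2$ equals $\nu(d)$, where $\nu(2):=1$ and, for $d>2$, $\nu(d)$ is half the number of multiplicative units in $\mathbb{Z}/d\mathbb{Z}$. *)

theory Defs
  imports "HOL-Number_Theory.Number_Theory"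
begin

text \<open>The lattice L_{n,d} = Z^2 (vectors as int pairs, coordinates w.r.t. the given basis)
  with Gram matrix ((2n-2)/d^2) * [[1,0],[0,0]].\<close>

definition lform :: "int \<Rightarrow> int \<Rightarrow> int \<times> int \<Rightarrow> int \<times> int \<Rightarrow> int" where
  "lform n d v w = ((2*n - 2) div d^2) * fst v * fst w"

definition vadd :: "int \<times> int \<Rightarrow> int \<times> int \<Rightarrow> int \<times> int" where
  "vadd v w = (fst v + fst w, snd v + snd w)"

definition vscale :: "int \<Rightarrow> int \<times> int \<Rightarrow> int \<times> int" where
  "vscale m v = (m * fst v, m * snd v)"

definition primitive :: "int \<times> int \<Rightarrow> bool" where
  "primitive v \<longleftrightarrow> v \<noteq> (0,0) \<and> (\<forall>m w. v = vscale m w \<longrightarrow> m = 1 \<or> m = -1)"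

definition OL :: "int \<Rightarrow> int \<Rightarrow> (int \<times> int \<Rightarrow> int \<times> int) set" where
  "OL n d = {g. bij g \<and> (\<forall>v w. g (vadd v w) = vadd (g v) (g w))
               \<and> (\<forall>v w. lform n d (g v) (g w) = lform n d v w)}"

definition prim_vecs :: "int \<Rightarrow> int \<Rightarrow> (int \<times> int) set" where
  "prim_vecs n d = {v. primitive v \<and> lform n d v v = 2*n - 2}"

definition orbits :: "int \<Rightarrow> int \<Rightarrow> (int \<times> int) set set" where
  "orbits n d = {{g v | g. g \<in> OL n d} | v. v \<in> prim_vecs n d}"

definition nu :: "nat \<Rightarrow> nat" where
  "nu d = (if d = 2 then 1 else totient d div 2)"

end

theory Submission
  imports Defs
begin

text \<open>The form only sees the first coordinate, so a self-intersection of \<open>2n - 2\<close> forces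
  \<open>\<bar>x\<bar> = d\<close>, and primitivity becomes \<open>gcd d y = 1\<close>. Every isometry preserves the radical
  \<open>0 \<times> \<int>\<close> and is therefore a shear \<open>(x, y) \<mapsto> (\<pm>x, c x \<pm> y)\<close>; applied to \<open>(\<pm>d, y)\<close>
  these change \<open>y\<close> exactly by a multiple of \<open>d\<close> and a sign. Orbits thus correspond to units
  of \<open>\<int>/d\<close> up to sign, and \<open>k \<mapsto> d - k\<close> pairs up the units without fixed points when
  \<open>d > 2\<close>.\<close>

lemma primitive_iff_gcd: "primitive (x, y) \<longleftrightarrow> gcd x y = 1"
proof
  assume p: "primitive (x, y)"
  have "(x, y) = vscale (gcd x y) (x div gcd x y, y div gcd x y)"
    by (simp add: vscale_def)
  hence "gcd x y = 1 \<or> gcd x y = -1"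
    using p unfolding primitive_def by blast
  thus "gcd x y = 1"
    using gcd_ge_0_int[of x y] by linarith
next
  assume g: "gcd x y = 1"
  have "m = 1 \<or> m = -1" if "(x, y) = vscale m w" for m w
  proof -
    have "m dvd x" "m dvd y"
      using that by (auto simp: vscale_def)
    hence "m dvd 1"
      using g by (metis gcd_greatest)
    thus ?thesis
      by (auto simp: abs_if split: if_splits)
  qed
  thus "primitive (x, y)"
    using g unfolding primitive_def by auto
qed

lemma form_coefficient:
  fixes n d :: int
  assumes "n \<ge> 2" and "d \<ge> 1" and "d^2 dvd n - 1"
  shows "(2*n - 2) div d^2 > 0" and "2*n - 2 = (2*n - 2) div d^2 * d^2"
proof -
  obtain k where k: "n - 1 = d^2 * k"
    using assms(3) by (rule dvdE)
  have "d^2 > 0"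
    using assms(2) by simp
  moreover have "0 < d^2 * k"
    using k assms(1) by linarith
  ultimately have "k > 0"
    using zero_less_mult_pos by blast
  moreover have "2*n - 2 = d^2 * (2*k)"
    using k by (simp add: algebra_simps)
  ultimately show "(2*n - 2) div d^2 > 0" "2*n - 2 = (2*n - 2) div d^2 * d^2"
    using \<open>d^2 > 0\<close> by simp_all
qed

lemma self_intersection_iff:
  fixes n d :: int
  assumes "n \<ge> 2" and "d \<ge> 1" and "d^2 dvd n - 1"
  shows "lform n d (x, y) (x, y) = 2*n - 2 \<longleftrightarrow> \<bar>x\<bar> = d"
proof -
  let ?K = "(2*n - 2) div d^2"
  have "lform n d (x, y) (x, y) = 2*n - 2 \<longleftrightarrow> ?K * x^2 = ?K * d^2"
    using form_coefficient[OF assms] by (simp add: lform_def power2_eq_square mult.assoc)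
  also have "\<dots> \<longleftrightarrow> x^2 = d^2"
    using form_coefficient(1)[OF assms] by simp
  also have "\<dots> \<longleftrightarrow> \<bar>x\<bar> = d"
    using assms(2) by (auto simp: power2_eq_iff)
  finally show ?thesis .
qed

lemma primitive_self_intersection_iff:
  fixes n d :: int
  assumes "n \<ge> 2" and "d \<ge> 1" and "d^2 dvd n - 1"
  shows "primitive (x, y) \<and> lform n d (x, y) (x, y) = 2*n - 2 \<longleftrightarrow> \<bar>x\<bar> = d \<and> gcd d y = 1"
proof -
  have "gcd x y = 1 \<and> \<bar>x\<bar> = d \<longleftrightarrow> \<bar>x\<bar> = d \<and> gcd d y = 1"
    using gcd_abs1_int[of x y] by auto
  thus ?thesis
    by (simp only: primitive_iff_gcd self_intersection_iff[OF assms])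
qed

lemma prim_vecs_eq:
  fixes n d :: int
  assumes "n \<ge> 2" and "d \<ge> 1" and "d^2 dvd n - 1"
  shows "prim_vecs n d = {(x, y). \<bar>x\<bar> = d \<and> coprime d y}"
proof -
  have "v \<in> prim_vecs n d \<longleftrightarrow> \<bar>fst v\<bar> = d \<and> coprime d (snd v)" for v
    using primitive_self_intersection_iff[OF assms, of "fst v" "snd v"]
    by (simp add: prim_vecs_def coprime_iff_gcd_eq_1)
  thus ?thesis
    by (simp add: set_eq_iff split_def)
qed

lemma additive_vscale:
  assumes add: "\<forall>v w. g (vadd v w) = vadd (g v) (g w)"
  shows "g (vscale m v) = vscale m (g v)"
proof -
  have g0: "g (0, 0) = (0, 0)"
  proof -
    have "g (0, 0) = vadd (g (0, 0)) (g (0, 0))"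
      using add[rule_format, of "(0, 0)" "(0, 0)"] by (simp add: vadd_def)
    thus ?thesis
      by (cases "g (0, 0)") (simp add: vadd_def)
  qed
  have nat: "g (vscale (int k) v) = vscale (int k) (g v)" for k
  proof (induction k)
    case 0
    thus ?case
      using g0 by (simp add: vscale_def)
  next
    case (Suc k)
    have "vscale (int (Suc k)) v = vadd v (vscale (int k) v)"
      by (simp add: vscale_def vadd_def algebra_simps)
    hence "g (vscale (int (Suc k)) v) = vadd (g v) (vscale (int k) (g v))"
      using add Suc.IH by metis
    thus ?case
      by (simp add: vscale_def vadd_def algebra_simps)
  qed
  have neg: "g (vscale (-1) u) = vscale (-1) (g u)" for u
  proof -
    have "(0, 0) = vadd (g u) (g (vscale (-1) u))"
      using g0 add[rule_format, of u "vscale (-1) u"] by (simp add: vadd_def vscale_def)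
    thus ?thesis
      by (cases "g u", cases "g (vscale (-1) u)") (simp add: vadd_def vscale_def)
  qed
  show ?thesis
  proof (cases "m \<ge> 0")
    case True
    thus ?thesis
      using nat[of "nat m"] by simp
  next
    case False
    then obtain k where m: "m = - int k"
      by (metis nonpos_int_cases linorder_linear)
    have "g (vscale m v) = g (vscale (-1) (vscale (int k) v))"
      using m by (simp add: vscale_def)
    also have "\<dots> = vscale (-1) (vscale (int k) (g v))"
      using nat neg by simp
    finally show ?thesis
      using m by (simp add: vscale_def)
  qed
qed

lemma shear_in_OL:
  assumes a: "a = 1 \<or> a = -1" and e: "e = 1 \<or> e = -1"
  shows "(\<lambda>v. (a * fst v, c * fst v + e * snd v)) \<in> OL n d"
proof -
  let ?g = "\<lambda>v. (a * fst v, c * fst v + e * snd v)"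
  let ?h = "\<lambda>v. (a * fst v, - (e * c * a) * fst v + e * snd v)"
  have "?g \<circ> ?h = id" "?h \<circ> ?g = id"
    using a e by (auto simp: fun_eq_iff)
  hence "bij ?g"
    using o_bij by blast
  moreover have "\<forall>v w. ?g (vadd v w) = vadd (?g v) (?g w)"
    by (simp add: vadd_def algebra_simps)
  moreover have "\<forall>v w. lform n d (?g v) (?g w) = lform n d v w"
    using a by (auto simp: lform_def)
  ultimately show ?thesis
    unfolding OL_def by blast
qed

lemma OL_is_shear:
  assumes K: "(2*n - 2) div d^2 \<noteq> 0" and g: "g \<in> OL n d"
  obtains a c e where "a = 1 \<or> a = -1" "e = 1 \<or> e = -1" "\<And>x y. g (x, y) = (a * x, c * x + e * y)"
proof -
  let ?K = "(2*n - 2) div d^2"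
  have add: "\<forall>v w. g (vadd v w) = vadd (g v) (g w)" and "bij g"
    and form: "\<And>v w. lform n d (g v) (g w) = lform n d v w"
    using g by (auto simp: OL_def)
  obtain a c where ac: "g (1, 0) = (a, c)" by fastforce
  obtain b e where be: "g (0, 1) = (b, e)" by fastforce
  have lin: "g (x, y) = (a * x + b * y, c * x + e * y)" for x y
  proof -
    have "(x, y) = vadd (vscale x (1, 0)) (vscale y (0, 1))"
      by (simp add: vadd_def vscale_def)
    hence "g (x, y) = vadd (vscale x (g (1, 0))) (vscale y (g (0, 1)))"
      using add additive_vscale[OF add] by metis
    thus ?thesis
      using ac be by (simp add: vadd_def vscale_def algebra_simps)
  qed
  have "?K * b * b = 0"
    using form[of "(0, 1)" "(0, 1)"] be by (simp add: lform_def)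
  hence b: "b = 0"
    using K by simp
  have "?K * (a * a) = ?K * 1"
    using form[of "(1, 0)" "(1, 0)"] ac by (simp add: lform_def mult.assoc)
  hence "a * a = 1"
    using K by (simp only: mult_cancel_left) simp
  hence a: "a = 1 \<or> a = -1"
    by (simp add: zmult_eq_1_iff)
  \<comment> \<open>Surjectivity onto \<open>(0, 1)\<close> makes the diagonal entry \<open>e\<close> a unit.\<close>
  obtain v where "g v = (0, 1)"
    using \<open>bij g\<close> by (metis bij_pointE)
  hence "e * snd v = 1"
    using lin[of "fst v" "snd v"] a b by auto
  hence "e = 1 \<or> e = -1"
    by (auto simp: zmult_eq_1_iff)
  thus thesis
    using that a lin b by auto
qed

definition orbit :: "int \<Rightarrow> int \<Rightarrow> int \<times> int \<Rightarrow> (int \<times> int) set" where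
  "orbit n d v = {g v | g. g \<in> OL n d}"

definition pm_class :: "int \<Rightarrow> int \<Rightarrow> (int \<times> int) set" where
  "pm_class d y = {(u, z). \<bar>u\<bar> = d \<and> ([y = z] (mod d) \<or> [y = - z] (mod d))}"

lemma orbit_eq_pm_class:
  assumes K: "(2*n - 2) div d^2 \<noteq> 0" and x: "\<bar>x\<bar> = d"
  shows "orbit n d (x, y) = pm_class d y"
proof (intro equalityI subsetI)
  fix p assume "p \<in> orbit n d (x, y)"
  then obtain g where g: "g \<in> OL n d" "p = g (x, y)"
    by (auto simp: orbit_def)
  then obtain a c e where "a = 1 \<or> a = -1" "e = 1 \<or> e = -1" "p = (a * x, c * x + e * y)"
    using OL_is_shear[OF K g(1)] by metis
  moreover have "d dvd x"
    using x by auto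
  ultimately show "p \<in> pm_class d y"
    using x by (auto simp: pm_class_def cong_iff_dvd_diff)
next
  fix p assume "p \<in> pm_class d y"
  then obtain u z where p: "p = (u, z)" "\<bar>u\<bar> = d" "[y = z] (mod d) \<or> [y = - z] (mod d)"
    by (auto simp: pm_class_def)
  have "u = x \<or> u = - x"
    using p(2) x by arith
  then obtain a where a: "a = 1 \<or> a = -1" "u = a * x"
    by (metis mult_1 mult_minus1)
  obtain e where e: "e = 1 \<or> e = -1" "x dvd z - e * y"
    using p(3) x by (metis abs_dvd_iff cong_iff_dvd_diff dvd_diff_commute
        mult_1 mult_minus1 cong_minus_minus_iff minus_minus)
  then obtain c where "z = c * x + e * y"
    by (metis dvd_def eq_diff_eq mult.commute)
  moreover define g where "g = (\<lambda>v :: int \<times> int. (a * fst v, c * fst v + e * snd v))"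
  ultimately have "g (x, y) = p" "g \<in> OL n d"
    using a p(1) shear_in_OL[OF a(1) e(1)] by simp_all
  thus "p \<in> orbit n d (x, y)"
    unfolding orbit_def by blast
qed

lemma orbits_eq_pm_class_image:
  fixes n d :: int
  assumes "n \<ge> 2" and "d \<ge> 1" and "d^2 dvd n - 1"
  shows "orbits n d = pm_class d ` {y. coprime d y}"
proof -
  have K: "(2*n - 2) div d^2 \<noteq> 0"
    using form_coefficient(1)[OF assms] by simp
  let ?V = "{(x, y). \<bar>x\<bar> = d \<and> coprime d y}"
  have "orbits n d = (\<lambda>(x, y). orbit n d (x, y)) ` ?V"
    unfolding prim_vecs_eq[OF assms, symmetric] by (auto simp: orbits_def orbit_def)
  also have "\<dots> = (\<lambda>(x, y). pm_class d y) ` ?V"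
    using orbit_eq_pm_class[OF K] by (intro image_cong) auto
  also have "\<dots> = pm_class d ` snd ` ?V"
    by (simp add: image_image split_def)
  also have "snd ` ?V = {y. coprime d y}"
    using assms(2) by (auto simp: image_iff) (metis abs_of_nonneg order.trans zero_le_one)
  finally show ?thesis .
qed

lemma pm_class_cong:
  assumes "[y = y'] (mod d) \<or> [y = - y'] (mod d)"
  shows "pm_class d y = pm_class d y'"
proof -
  have "[y = z] (mod d) \<or> [y = - z] (mod d) \<longleftrightarrow> [y' = z] (mod d) \<or> [y' = - z] (mod d)" for z
    using assms by (metis cong_trans cong_sym cong_minus_minus_iff minus_minus)
  thus ?thesis
    unfolding pm_class_def by blast
qed

lemma inj_on_pm_class_lower_half:
  assumes "d \<ge> 2"
  shows "inj_on (\<lambda>k. pm_class d (int k)) {k. 0 < k \<and> 2 * k \<le> nat d}"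
proof (rule inj_onI)
  fix k k' :: nat
  assume k: "k \<in> {k. 0 < k \<and> 2 * k \<le> nat d}" and k': "k' \<in> {k. 0 < k \<and> 2 * k \<le> nat d}"
    and eq: "pm_class d (int k) = pm_class d (int k')"
  have bounds: "0 < int k" "0 < int k'" "2 * int k \<le> d" "2 * int k' \<le> d"
    using k k' assms by auto
  have "(d, int k') \<in> pm_class d (int k)"
    using eq assms by (simp add: pm_class_def)
  hence "d dvd int k - int k' \<or> d dvd int k + int k'"
    by (simp add: pm_class_def cong_iff_dvd_diff)
  thus "k = k'"
  proof
    assume dvd: "d dvd int k - int k'"
    show ?thesis
    proof (rule ccontr)
      assume "k \<noteq> k'"
      hence "\<bar>d\<bar> \<le> \<bar>int k - int k'\<bar>"
        using dvd_imp_le_int[OF _ dvd] by simp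
      thus False
        using bounds by linarith
    qed
  next
    assume dvd: "d dvd int k + int k'"
    have "\<bar>d\<bar> \<le> \<bar>int k + int k'\<bar>"
      using dvd_imp_le_int[OF _ dvd] bounds by simp
    thus ?thesis
      using bounds by linarith
  qed
qed

lemma int_in_totatives_iff:
  assumes "d \<ge> 0"
  shows "k \<in> totatives (nat d) \<longleftrightarrow> 0 < k \<and> int k \<le> d \<and> coprime (int k) d"
proof -
  have "coprime k (nat d) \<longleftrightarrow> coprime (int k) d"
    using assms coprime_int_iff[of k "nat d"] by simp
  moreover have "k \<le> nat d \<longleftrightarrow> int k \<le> d"
    using assms by linarith
  ultimately show ?thesis
    by (simp only: in_totatives_iff)
qed

lemma pm_class_image_coprime:
  assumes d: "d \<ge> 2"
  shows "pm_class d ` {y. coprime d y}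
    = (\<lambda>k. pm_class d (int k)) ` {k \<in> totatives (nat d). 2 * k \<le> nat d}"
proof (intro equalityI subsetI)
  fix P
  assume "P \<in> pm_class d ` {y. coprime d y}"
  then obtain y where y: "coprime d y" "P = pm_class d y"
    by blast
  define r where "r = y mod d"
  have r: "0 \<le> r" "r < d" "[y = r] (mod d)"
    using d by (auto simp: r_def cong_def)
  have cr: "coprime r d"
    using y(1) d by (simp add: r_def coprime_commute)
  hence "r \<noteq> 0"
    using d by auto
  \<comment> \<open>Reflect the residue into the lower half: \<open>d - r \<equiv> -y\<close>.\<close>
  define s where "s = (if 2 * r \<le> d then r else d - r)"
  have "coprime s d"
    using cr gcd_diff2[of d r] by (simp add: s_def coprime_iff_gcd_eq_1)
  moreover have "0 < s" "2 * s \<le> d"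
    using r \<open>r \<noteq> 0\<close> by (auto simp: s_def)
  moreover have "[y = s] (mod d) \<or> [y = - s] (mod d)"
  proof -
    have "d dvd (y - r) + d"
      using r(3) by (simp add: cong_iff_dvd_diff)
    moreover have "(y - r) + d = y - - (d - r)"
      by simp
    ultimately show ?thesis
      using r(3) unfolding s_def cong_iff_dvd_diff by (metis (full_types))
  qed
  ultimately have "nat s \<in> {k \<in> totatives (nat d). 2 * k \<le> nat d}" "P = pm_class d (int (nat s))"
    using d y(2) pm_class_cong by (auto simp: int_in_totatives_iff)
  thus "P \<in> (\<lambda>k. pm_class d (int k)) ` {k \<in> totatives (nat d). 2 * k \<le> nat d}"
    by blast
next
  fix P
  assume "P \<in> (\<lambda>k. pm_class d (int k)) ` {k \<in> totatives (nat d). 2 * k \<le> nat d}"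
  then obtain k where "k \<in> totatives (nat d)" "P = pm_class d (int k)"
    by blast
  thus "P \<in> pm_class d ` {y. coprime d y}"
    using d by (auto simp: int_in_totatives_iff coprime_commute)
qed

lemma totient_eq_twice_card_lower_half:
  fixes D :: nat
  assumes "D > 2"
  shows "totient D = 2 * card {k \<in> totatives D. 2 * k \<le> D}"
proof -
  let ?A = "{k \<in> totatives D. 2 * k \<le> D}"
  let ?B = "{k \<in> totatives D. 2 * k > D}"
  have reflect: "D - k \<in> totatives D" if "k \<in> totatives D" for k
  proof -
    have "0 < k" "k \<le> D" "coprime k D"
      using that by (auto simp: in_totatives_iff)
    moreover have "k \<noteq> D"
    proof
      assume "k = D"
      thus False
        using \<open>coprime k D\<close> assms by simp
    qed
    ultimately have "0 < D - k"
      by linarith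
    have "gcd (D - k) D = gcd k D"
      using gcd_diff2_nat[of k D] \<open>k \<le> D\<close> by simp
    hence "coprime (D - k) D"
      using \<open>coprime k D\<close> unfolding coprime_iff_gcd_eq_1 by simp
    with \<open>0 < D - k\<close> show ?thesis
      by (simp add: in_totatives_iff)
  qed
  have no_midpoint: "2 * k \<noteq> D" if "k \<in> totatives D" for k
  proof
    assume "2 * k = D"
    hence "coprime k (2 * k)"
      using that by (simp add: in_totatives_iff)
    hence "k = 1"
      by simp
    thus False
      using \<open>2 * k = D\<close> assms by simp
  qed
  have "?B = (\<lambda>k. D - k) ` ?A"
  proof (intro equalityI subsetI)
    fix k
    assume "k \<in> ?B"
    hence "D - k \<in> ?A" "k = D - (D - k)"
      using reflect totatives_le[of k D] by auto
    thus "k \<in> (\<lambda>k. D - k) ` ?A"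
      by blast
  next
    fix k
    assume "k \<in> (\<lambda>k. D - k) ` ?A"
    then obtain j where "j \<in> ?A" "k = D - j"
      by blast
    thus "k \<in> ?B"
      using reflect no_midpoint[of j] by fastforce
  qed
  moreover have "inj_on (\<lambda>k. D - k) ?A"
    by (auto simp: inj_on_def dest: totatives_le)
  ultimately have "card ?B = card ?A"
    by (simp add: card_image)
  moreover have "totatives D = ?A \<union> ?B" "?A \<inter> ?B = {}"
    by auto
  ultimately show ?thesis
    unfolding totient_def using card_Un_disjoint[of ?A ?B] by simp
qed

lemma card_pm_class_coprime:
  assumes d: "d \<ge> 2"
  shows "card (pm_class d ` {y. coprime d y}) = nu (nat d)"
proof -
  let ?A = "{k \<in> totatives (nat d). 2 * k \<le> nat d}"
  have "inj_on (\<lambda>k. pm_class d (int k)) ?A"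
    using inj_on_pm_class_lower_half[OF d] by (rule inj_on_subset) (auto simp: in_totatives_iff)
  hence "card (pm_class d ` {y. coprime d y}) = card ?A"
    unfolding pm_class_image_coprime[OF d] by (rule card_image)
  also have "\<dots> = nu (nat d)"
  proof (cases "d = 2")
    case True
    hence "?A = {1}"
      by (auto simp: in_totatives_iff)
    thus ?thesis
      using True by (simp add: nu_def)
  next
    case False
    hence "nat d > 2"
      using d by simp
    thus ?thesis
      using totient_eq_twice_card_lower_half[of "nat d"] by (simp add: nu_def)
  qed
  finally show ?thesis .
qed

theorem lemma2p6:
  fixes n d :: int
  assumes "n \<ge> 2" and "d \<ge> 1" and "d^2 dvd n - 1"
  shows "(\<forall>x y. (primitive (x, y) \<and> lform n d (x, y) (x, y) = 2*n - 2)
                 \<longleftrightarrow> (\<bar>x\<bar> = d \<and> gcd d y = 1))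
       \<and> (\<forall>y z. primitive (d, y) \<longrightarrow> primitive (d, z) \<longrightarrow>
            ((\<exists>g\<in>OL n d. g (d, y) = (d, z)) \<longleftrightarrow> ([y = z] (mod d) \<or> [y = -z] (mod d))))
       \<and> (d \<ge> 2 \<longrightarrow> card (orbits n d) = nu (nat d))"
proof -
  have K: "(2*n - 2) div d^2 \<noteq> 0"
    using form_coefficient(1)[OF assms] by simp
  have "(\<exists>g\<in>OL n d. g (d, y) = (d, z)) \<longleftrightarrow> (d, z) \<in> orbit n d (d, y)" for y z
    unfolding orbit_def by (auto simp: eq_commute)
  hence "(\<exists>g\<in>OL n d. g (d, y) = (d, z)) \<longleftrightarrow> [y = z] (mod d) \<or> [y = -z] (mod d)" for y z
    using orbit_eq_pm_class[OF K, of d] assms(2) by (simp add: pm_class_def)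
  thus ?thesis
    using primitive_self_intersection_iff[OF assms] orbits_eq_pm_class_image[OF assms]
      card_pm_class_coprime by simp
qed

end
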